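(* Consider the planning procedure described in the context, run at commit times $t_0<t_1<\cdots<t_k<\cdots$ over the mission horizon $[t_0,t_f]$, and let $p^{\Omega_{\mathrm{com}}}_k$ be the tube trajectory committed at $t_k$. Define the solution as the concatenation of committed tubes $p^\Omega_{\mathrm{sol}}=\{p^{\Omega_{\mathrm{com}}}_0,p^{\Omega_{\mathrm{com}}}_1,\dots,p^{\Omega_{\mathrm{com}}}_k,\dots\}$. Assume the cost of the initial backup satisfies $J^{\mathrm{back}}_0\le B$. If at each $t_k$ the valid pairs are generated, the budget-feasible set $\mathcal{F}^c_k$ is formed, the commitment rule is applied, and the system tracks each committed tube, then the solution is safe, i.e. its tube lies in $\mathcal{S}(t)$ for all $t\in[t_0,t_f]$, and $J(p^\Omega_{\mathrm{sol}})\le B$.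
   Context: System: $\dot x=f_0(x)+F(x)\theta_f+(g_0(x)+G(x)\theta_g)u+n_{\mathrm{add}}(t)$, $y=c(x)+n_{\mathrm{meas}}(t)$, with state $x\in\mathcal{X}\subset\mathbb{R}^n$, input $u\in\mathcal{U}$, unknown parameters $\theta=(\theta_f,\theta_g)$ in a known compact set $\Theta$, and bounded disturbances. The safe set is $\mathcal{S}(t)\subseteq\mathcal{X}$, the goal set $\mathcal{G}$, the budget $B$, and the mission cost $J(p_x,p_u)=\int_{t_0}^{t_f}\ell(p_x,p_u)\,dt+\ell_T(p_x(t_f))$. A trajectory $p=(p_x,p_u)$ on $[t_i,t_f]$ satisfies the nominal dynamics with fixed parameter estimates. A tube cross-section $\mathcal{E}(t)$ is a compact set containing the origin that bounds the deviation of the true state from $p_x(t)$ for all parameters in $\Theta$ and all admissible disturbances; the tube is $\Omega(t)=p_x(t)\oplus\mathcal{E}(t)$. A robust controlled-invariant (RCI) tube trajectory $p^\Omega=(p_x,p_u,\Omega)$ satisfies tightened constraints $p_x(t)\in\mathcal{S}\ominus\mathcal{E}(t)$, $p_u(t)\in\mathcal{U}\ominus\Delta U(t)$, $p_x(t_f)\in\mathcal{G}\ominus\mathcal{E}(t_f)$, and admits an ancillary controller $u=p_u+\pi(t,x,p^\Omega)$ such that $x(t_i)\in\Omega(t_i)$ implies $x(t)\in\Omega(t)$ for all $t$ and all parameters/disturbances. Procedure at each $t_k$: (1) compute a backup RCI tube trajectory $p^{\Omega_{\mathrm{bak}}}_k$ on $[t_k,t_f]$ with $\Omega^{\mathrm{bak}}_k(t)\subseteq\mathcal{S}(t)$,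 built from the current parameter set $\Theta^k$. (2) For horizons $T^{c,k}_i=iT_c$, $i=1,\dots,N_k$ with $N_k=\max\{i: t_k+iT_c\le t_f\}$, the conservative candidate $p^{\Omega_{\mathrm{cons}},i}_k$ is the backup restricted to $[t_k,t_k+T^{c,k}_i]$, and an informative candidate $p^{\mathrm{info},i}_k$ is a trajectory on this interval ending at $p^{\mathrm{cons},i}_{k,x}(t_k+T^{c,k}_i)$. The pair is valid if there is a tube $\Omega^{\mathrm{info},i}_k=p^{\mathrm{info},i}_{k,x}\oplus\mathcal{E}^{\mathrm{info},i}_k$ making $p^{\Omega_{\mathrm{info}},i}_k$ an RCI tube trajectory with $\Omega^{\mathrm{info},i}_k(t)\subseteq\mathcal{S}\ominus\mathcal{E}(t)$ and $p^{\mathrm{info},i}_{k,u}(t)\in\mathcal{U}\ominus\Delta U(t)$ on the horizon. (3) With $J^k_{\mathrm{exec}}$ the cost of the executed trajectory up to $t_k$, $J^k_{\mathrm{back}}$ the cost of the backup from $t_k$ to $t_f$, and $\Delta J_i=J(p^{\Omega_{\mathrm{info}},i}_k)-J(p^{\Omega_{\mathrm{cons}},i}_k)$, the feasible set is $\mathcal{F}^c_k=\{i:\text{pair }i\text{ valid},\ J^k_{\mathrm{exec}}+J^k_{\mathrm{back}}+\Delta J_i\le B\}$. (4) If $\mathcal{F}^c_k\neq\emptyset$, commit the informative tube of the pair maximizing the score $s^{c,k}_i=e^{-\lambda T^{c,k}_i}\Delta w_i$ ($\lambda>0$, $\Delta w_i$ the predicted reduction in average directional width of the parameter set); otherwise commit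 the conservative candidate with the smallest horizon. After execution the parameter set is updated by set-membership identification $\Theta^{k+1}=\Theta^k\cap\{\theta:|z(t)-\Phi(x(t),u(t))\theta|\le\overline w\}$ (so it is non-increasing and contains the true parameter), and the backup is recomputed. Standing assumptions: the executed trajectory equals the planned committed trajectory, measurements satisfy $z_j=\Phi_j\theta^\star+w_j$ with $\|w_j\|_\infty\le\overline w$; and tube cost is monotone under set inclusion: if $\Theta'\subseteq\Theta$, the RCI tube trajectory computed from $\Theta'$ on $[t_k,t_f]$ has cost no larger than the one computed from $\Theta$. *)

theory Defs
  imports "HOL-Analysis.Analysis"
begin

text \<open>Dynamics xdot = f0 x + F x thf + (g0 x + G x thg) u + n_add, with
  x :: real^'n, u :: real^'m, thf :: real^'a, thg :: real^'b.  F x is an n x a matrix;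
  G x thg is the n x m matrix  sum_j thg_j G_j(x)  (linear in thg).\<close>

record ('n,'m,'a,'b) sysdata =
  f0 :: "real^'n \<Rightarrow> real^'n"
  Fm :: "real^'n \<Rightarrow> real^'a^'n"
  g0 :: "real^'n \<Rightarrow> real^'m^'n"
  Gm :: "real^'n \<Rightarrow> (real^'m^'n)^'b"
  Nadd :: "(real^'n) set"

definition dyn ::
  "('n::finite,'m::finite,'a::finite,'b::finite) sysdata \<Rightarrow> real^'n \<Rightarrow> ((real^'a) \<times> (real^'b))
     \<Rightarrow> real^'m \<Rightarrow> real^'n" where
  "dyn sy x \<theta> u =
     f0 sy x + Fm sy x *v fst \<theta> + (g0 sy x + (\<Sum>j\<in>UNIV. (snd \<theta> $ j) *\<^sub>R (Gm sy x $ j))) *v u"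

definition mink_diff :: "'a::ab_group_add set \<Rightarrow> 'a set \<Rightarrow> 'a set" where
  "mink_diff A B = {x. \<forall>b\<in>B. x + b \<in> A}"

definition mink_sum_pt :: "'a::ab_group_add \<Rightarrow> 'a set \<Rightarrow> 'a set" where
  "mink_sum_pt p E = (\<lambda>e. p + e) ` E"

text \<open>A tube trajectory: nominal state p_x, nominal input p_u, cross-section E(t) and
  the input tightening set Delta U(t).  Its tube is Omega(t) = p_x(t) + E(t).\<close>

record ('n,'m) tubetraj =
  tx :: "real \<Rightarrow> real^'n"
  tu :: "real \<Rightarrow> real^'m"
  tE :: "real \<Rightarrow> (real^'n) set"
  tdU :: "real \<Rightarrow> (real^'m) set"

definition tube :: "('n::finite,'m::finite,'z) tubetraj_scheme \<Rightarrow> real \<Rightarrow> (real^'n) set" where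
  "tube p t = mink_sum_pt (tx p t) (tE p t)"

definition nominal_traj ::
  "('n::finite,'m::finite,'a::finite,'b::finite) sysdata \<Rightarrow> ((real^'a) \<times> (real^'b)) \<Rightarrow> real \<Rightarrow> real
     \<Rightarrow> (real \<Rightarrow> real^'n) \<Rightarrow> (real \<Rightarrow> real^'m) \<Rightarrow> bool" where
  "nominal_traj sy thh a b px pu \<longleftrightarrow> a \<le> b \<and>
     (\<forall>t\<in>{a..b}. (px has_vector_derivative dyn sy (px t) thh (pu t)) (at t within {a..b}))"

text \<open>Robust controlled-invariant tube trajectory on [a,b] for the parameter set Th
  (safe set S(t), input set U, goal set Gs, mission final time tf).\<close>
definition rci_tube ::
  "('n::finite,'m::finite,'a::finite,'b::finite) sysdata \<Rightarrow> ((real^'a) \<times> (real^'b)) set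
    \<Rightarrow> ((real^'a) \<times> (real^'b)) \<Rightarrow> (real \<Rightarrow> (real^'n) set) \<Rightarrow> (real^'m) set \<Rightarrow> (real^'n) set
    \<Rightarrow> real \<Rightarrow> real \<Rightarrow> real \<Rightarrow> ('n,'m) tubetraj \<Rightarrow> bool" where
  "rci_tube sy Th thh S U Gs tf a b p \<longleftrightarrow>
     nominal_traj sy thh a b (tx p) (tu p) \<and>
     (\<forall>t\<in>{a..b}. compact (tE p t) \<and> 0 \<in> tE p t \<and>
        tx p t \<in> mink_diff (S t) (tE p t) \<and> tu p t \<in> mink_diff U (tdU p t)) \<and>
     (b = tf \<longrightarrow> tx p tf \<in> mink_diff Gs (tE p tf)) \<and>
     (\<exists>\<pi> :: real \<Rightarrow> real^'n \<Rightarrow> real^'m.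
        \<forall>\<theta>\<in>Th. \<forall>(nd :: real \<Rightarrow> real^'n) (x :: real \<Rightarrow> real^'n).
          (\<forall>t\<in>{a..b}. nd t \<in> Nadd sy) \<longrightarrow>
          (\<forall>t\<in>{a..b}. (x has_vector_derivative
              (dyn sy (x t) \<theta> (tu p t + \<pi> t (x t)) + nd t)) (at t within {a..b})) \<longrightarrow>
          x a \<in> tube p a \<longrightarrow> (\<forall>t\<in>{a..b}. x t \<in> tube p t))"

definition traj_cost ::
  "(real^'n::finite \<Rightarrow> real^'m::finite \<Rightarrow> real) \<Rightarrow> (real^'n \<Rightarrow> real) \<Rightarrow> real \<Rightarrow> real \<Rightarrow> real
     \<Rightarrow> (real \<Rightarrow> real^'n) \<Rightarrow> (real \<Rightarrow> real^'m) \<Rightarrow> real" where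
  "traj_cost l lT tf a b px pu =
     integral {a..b} (\<lambda>t. l (px t) (pu t)) + (if b = tf then lT (px b) else 0)"

definition num_horizons :: "real \<Rightarrow> real \<Rightarrow> real \<Rightarrow> nat" where
  "num_horizons tf Tc tk = Max {i::nat. tk + real i * Tc \<le> tf}"

text \<open>Validity of the pair (conservative = backup pb restricted to [tk, tk+T],
  informative = pinfo on [tk, tk+T]).\<close>
definition valid_pair ::
  "('n::finite,'m::finite,'a::finite,'b::finite) sysdata \<Rightarrow> ((real^'a) \<times> (real^'b)) set
    \<Rightarrow> ((real^'a) \<times> (real^'b)) \<Rightarrow> (real \<Rightarrow> (real^'n) set) \<Rightarrow> (real^'m) set \<Rightarrow> (real^'n) set
    \<Rightarrow> real \<Rightarrow> real \<Rightarrow> real \<Rightarrow> ('n,'m) tubetraj \<Rightarrow> ('n,'m) tubetraj \<Rightarrow> bool" where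
  "valid_pair sy Th thh S U Gs tf tk T pb pinfo \<longleftrightarrow>
     tx pinfo (tk + T) = tx pb (tk + T) \<and>
     rci_tube sy Th thh S U Gs tf tk (tk + T) pinfo \<and>
     (\<forall>t\<in>{tk..tk+T}. tube pinfo t \<subseteq> mink_diff (S t) (tE pinfo t) \<and>
        tu pinfo t \<in> mink_diff U (tdU pinfo t))"


definition delta_cost ::
  "(real^'n::finite \<Rightarrow> real^'m::finite \<Rightarrow> real) \<Rightarrow> (real^'n \<Rightarrow> real) \<Rightarrow> real \<Rightarrow> real \<Rightarrow> real
     \<Rightarrow> ('n,'m) tubetraj \<Rightarrow> ('n,'m) tubetraj \<Rightarrow> real" where
  "delta_cost l lT tf tk T pinfo pb =
     traj_cost l lT tf tk (tk + T) (tx pinfo) (tu pinfo) - traj_cost l lT tf tk (tk + T) (tx pb) (tu pb)"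

text \<open>Budget-feasible set F^c_k, given J_exec^k (Jex), the backup pb at tk and the informative
  candidates infos i for horizons i*Tc, i = 1..N_k.\<close>
definition feasible_set ::
  "('n::finite,'m::finite,'a::finite,'b::finite) sysdata \<Rightarrow> ((real^'a) \<times> (real^'b)) set
    \<Rightarrow> ((real^'a) \<times> (real^'b)) \<Rightarrow> (real \<Rightarrow> (real^'n) set) \<Rightarrow> (real^'m) set \<Rightarrow> (real^'n) set
    \<Rightarrow> (real^'n \<Rightarrow> real^'m \<Rightarrow> real) \<Rightarrow> (real^'n \<Rightarrow> real) \<Rightarrow> real \<Rightarrow> real \<Rightarrow> real
    \<Rightarrow> real \<Rightarrow> real \<Rightarrow> ('n,'m) tubetraj \<Rightarrow> (nat \<Rightarrow> ('n,'m) tubetraj) \<Rightarrow> nat set" where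
  "feasible_set sy Th thh S U Gs l lT tf Tc B Jex tk pb infos =
     {i \<in> {1..num_horizons tf Tc tk}.
        valid_pair sy Th thh S U Gs tf tk (real i * Tc) pb (infos i) \<and>
        Jex + traj_cost l lT tf tk tf (tx pb) (tu pb)
            + delta_cost l lT tf tk (real i * Tc) (infos i) pb \<le> B}"

text \<open>Index of the committed piece active at time s (commit times tt 0 < ... < tt K = tf):
  piece k on [tt k, tt (k+1)), the last piece also at tf.\<close>
definition seg_index :: "(nat \<Rightarrow> real) \<Rightarrow> nat \<Rightarrow> real \<Rightarrow> nat" where
  "seg_index tt K s = (if s < tt K then (LEAST k. s < tt (Suc k)) else K - 1)"

definition sol_x :: "(nat \<Rightarrow> ('n::finite,'m::finite) tubetraj) \<Rightarrow> (nat \<Rightarrow> real) \<Rightarrow> nat \<Rightarrow> real \<Rightarrow> real^'n" where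
  "sol_x com tt K s = tx (com (seg_index tt K s)) s"

definition sol_u :: "(nat \<Rightarrow> ('n::finite,'m::finite) tubetraj) \<Rightarrow> (nat \<Rightarrow> real) \<Rightarrow> nat \<Rightarrow> real \<Rightarrow> real^'m" where
  "sol_u com tt K s = tu (com (seg_index tt K s)) s"

definition sol_tube :: "(nat \<Rightarrow> ('n::finite,'m::finite) tubetraj) \<Rightarrow> (nat \<Rightarrow> real) \<Rightarrow> nat \<Rightarrow> real \<Rightarrow> (real^'n) set" where
  "sol_tube com tt K s = tube (com (seg_index tt K s)) s"

definition exec_cost ::
  "(real^'n \<Rightarrow> real^'m \<Rightarrow> real) \<Rightarrow> (nat \<Rightarrow> ('n::finite,'m::finite) tubetraj) \<Rightarrow> (nat \<Rightarrow> real) \<Rightarrow> nat \<Rightarrow> nat \<Rightarrow> real" where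
  "exec_cost l com tt K k = integral {tt 0..tt k} (\<lambda>s. l (sol_x com tt K s) (sol_u com tt K s))"

end

theory Submission
  imports Defs
begin

text \<open>The invariant is that the cost executed up to a commit time
  \<open>t k\<close> plus the cost of the current backup from \<open>t k\<close> to \<open>tf\<close> stays within the budget.
  Committing the backup leaves this sum unchanged; committing an informative tube changes it
  by exactly \<open>\<Delta>J\<close>, which the feasible set keeps within budget, because the informative tube
  ends on the backup and the backup remains the continuation.  Recomputing the backup with the
  shrunken parameter set does not increase its cost.  Safety is local: every committed tube lies
  in \<open>S\<close> on its own interval, the backup by construction and the informative one because its
  tube lies in \<open>S \<ominus> E\<close> with \<open>0 \<in> E\<close>.\<close>

lemma mink_diff_subset: "0 \<in> B \<Longrightarrow> mink_diff A B \<subseteq> A"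
  unfolding mink_diff_def by force

lemma valid_pair_tube_subset:
  assumes "valid_pair sy Th thh S U Gs tf tk T pb pinfo" "s \<in> {tk..tk + T}"
  shows "tube pinfo s \<subseteq> S s"
proof -
  have "0 \<in> tE pinfo s" and "tube pinfo s \<subseteq> mink_diff (S s) (tE pinfo s)"
    using assms unfolding valid_pair_def rci_tube_def by auto
  then show ?thesis using mink_diff_subset by blast
qed

lemma commit_times_le:
  fixes t :: "nat \<Rightarrow> 'a::order"
  assumes "\<forall>k<K. t k < t (Suc k)" "i \<le> j" "j \<le> K"
  shows "t i \<le> t j"
  by (rule lift_Suc_mono_le_ivl[of "{..<K}" t i j]) (use assms in \<open>auto simp: less_imp_le\<close>)

lemma exists_segment_containing:
  fixes t :: "nat \<Rightarrow> 'a::linorder"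
  assumes "t 0 \<le> s" "s < t n"
  shows "\<exists>k<n. t k \<le> s \<and> s < t (Suc k)"
  using assms(2)
proof (induction n)
  case 0
  then show ?case using assms(1) by simp
next
  case (Suc n)
  then show ?case by (cases "s < t n") (auto intro: less_SucI)
qed

lemma seg_index_eq:
  assumes incr: "\<forall>k<K. t k < t (Suc k)" and "k < K" "t k \<le> s" "s < t (Suc k)"
  shows "seg_index t K s = k"
proof -
  have "s < t K"
    using commit_times_le[OF incr, of "Suc k" K] assms by simp
  moreover have "(LEAST j. s < t (Suc j)) = k"
  proof (rule Least_equality)
    fix j assume j: "s < t (Suc j)"
    show "k \<le> j"
    proof (rule ccontr)
      assume "\<not> k \<le> j"
      then have "t (Suc j) \<le> t k"
        using commit_times_le[OF incr, of "Suc j" k] \<open>k < K\<close> by simp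
      then show False using j \<open>t k \<le> s\<close> by simp
    qed
  qed (use assms in simp)
  ultimately show ?thesis unfolding seg_index_def by simp
qed

lemma seg_index_cover:
  assumes incr: "\<forall>k<K. t k < t (Suc k)" and "0 < K" "t 0 \<le> s" "s \<le> t K"
  obtains k where "k < K" "t k \<le> s" "s \<le> t (Suc k)" "seg_index t K s = k"
proof (cases "s = t K")
  case True
  then show ?thesis
    using that[of "K - 1"] commit_times_le[OF incr, of "K - 1" K] \<open>0 < K\<close>
    by (simp add: seg_index_def)
next
  case False
  then obtain k where "k < K" "t k \<le> s" "s < t (Suc k)"
    using exists_segment_containing[of t s K] assms by auto
  then show ?thesis using that seg_index_eq[OF incr] by simp
qed

lemma has_integral_concat:
  fixes f :: "real \<Rightarrow> 'a::banach"
  assumes "\<forall>k<n. t k \<le> t (Suc k)"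
    and "\<forall>k<n. (g k has_integral I k) {t k..t (Suc k)}"
    and "\<forall>k<n. \<forall>s\<in>{t k..<t (Suc k)}. f s = g k s"
  shows "(f has_integral (\<Sum>k<n. I k)) {t 0..t n}"
  using assms
proof (induction n)
  case 0
  show ?case by (simp add: has_integral_refl)
next
  case (Suc n)
  have "t 0 \<le> t n"
    by (rule lift_Suc_mono_le_ivl[of "{..<n}"]) (use Suc.prems(1) in auto)
  moreover have "t n \<le> t (Suc n)"
    using Suc.prems(1) by simp
  moreover have "(f has_integral I n) {t n..t (Suc n)}"
  proof (rule has_integral_spike_finite[of "{t (Suc n)}" _ f "g n"])
    show "(g n has_integral I n) {t n..t (Suc n)}"
      using Suc.prems(2) by simp
  qed (use Suc.prems(3) in auto)
  moreover have "(f has_integral (\<Sum>k<n. I k)) {t 0..t n}"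
    using Suc by simp
  ultimately show ?case
    using has_integral_combine by simp
qed

lemma traj_cost_split:
  assumes "a \<le> b" "b \<le> tf" "(\<lambda>s. l (px s) (pu s)) integrable_on {a..tf}"
  shows "traj_cost l lT tf a tf px pu
           = integral {a..b} (\<lambda>s. l (px s) (pu s)) + traj_cost l lT tf b tf px pu"
  unfolding traj_cost_def using Henstock_Kurzweil_Integration.integral_combine[OF assms] by simp

lemma traj_cost_splice:
  assumes "tk \<le> tk + T" "tk + T \<le> tf" "tx pinfo (tk + T) = tx pb (tk + T)"
    and "(\<lambda>s. l (tx pb s) (tu pb s)) integrable_on {tk..tf}"
  shows "integral {tk..tk + T} (\<lambda>s. l (tx pinfo s) (tu pinfo s))
           + traj_cost l lT tf (tk + T) tf (tx pb) (tu pb)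
         = traj_cost l lT tf tk tf (tx pb) (tu pb) + delta_cost l lT tf tk T pinfo pb"
  using traj_cost_split[where px = "tx pb" and pu = "tu pb", OF assms(1,2,4)] assms(3)
  unfolding delta_cost_def traj_cost_def by auto

lemma budget_invariant:
  fixes P Jnow Jnext :: "nat \<Rightarrow> real"
  assumes "Jnow 0 \<le> B"
    and step: "\<forall>k<K. (\<Sum>j<k. P j) + Jnow k \<le> B \<longrightarrow> (\<Sum>j<Suc k. P j) + Jnext k \<le> B"
    and recompute: "\<forall>k. Suc k < K \<longrightarrow> Jnow (Suc k) \<le> Jnext k"
  shows "k < K \<Longrightarrow> (\<Sum>j<Suc k. P j) + Jnext k \<le> B"
proof (induction k)
  case 0
  then show ?case using assms(1) step[rule_format, of 0] by simp
next
  case (Suc k)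
  have "(\<Sum>j<Suc k. P j) + Jnext k \<le> B" and "Jnow (Suc k) \<le> Jnext k"
    using Suc recompute by simp_all
  then have "(\<Sum>j<Suc k. P j) + Jnow (Suc k) \<le> B" by simp
  then show ?case using step Suc.prems by blast
qed

lemma committed_tube_safe_within_budget:
  fixes pb pc :: "('n::finite,'m::finite) tubetraj" and infos :: "nat \<Rightarrow> ('n,'m) tubetraj"
  assumes "tk \<le> tk'" "tk' \<le> tf"
    and backup_safe: "\<forall>s\<in>{tk..tf}. tube pb s \<subseteq> S s"
    and integrable_pb: "(\<lambda>s. l (tx pb s) (tu pb s)) integrable_on {tk..tf}"
    and integrable_infos: "\<forall>i\<in>{1..num_horizons tf Tc tk}.
          (\<lambda>s. l (tx (infos i) s) (tu (infos i) s)) integrable_on {tk..tk + real i * Tc}"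
    and commit: "(\<exists>i\<in>feasible_set sy Th thh S U Gs l lT tf Tc B Jex tk pb infos.
                    pc = infos i \<and> tk' = tk + real i * Tc) \<or> pc = pb"
  shows "(\<forall>s\<in>{tk..tk'}. tube pc s \<subseteq> S s)
       \<and> (\<lambda>s. l (tx pc s) (tu pc s)) integrable_on {tk..tk'}
       \<and> tx pc tk' = tx pb tk'
       \<and> (Jex + traj_cost l lT tf tk tf (tx pb) (tu pb) \<le> B \<longrightarrow>
            Jex + integral {tk..tk'} (\<lambda>s. l (tx pc s) (tu pc s))
              + traj_cost l lT tf tk' tf (tx pb) (tu pb) \<le> B)"
  using commit
proof
  assume "\<exists>i\<in>feasible_set sy Th thh S U Gs l lT tf Tc B Jex tk pb infos.
            pc = infos i \<and> tk' = tk + real i * Tc"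
  then obtain i where "i \<in> {1..num_horizons tf Tc tk}"
    and valid: "valid_pair sy Th thh S U Gs tf tk (real i * Tc) pb (infos i)"
    and budget: "Jex + traj_cost l lT tf tk tf (tx pb) (tu pb)
                   + delta_cost l lT tf tk (real i * Tc) (infos i) pb \<le> B"
    and pc: "pc = infos i" and tk': "tk' = tk + real i * Tc"
    unfolding feasible_set_def by blast
  have "tx pc tk' = tx pb tk'"
    using valid unfolding valid_pair_def pc tk' by simp
  moreover have "Jex + integral {tk..tk'} (\<lambda>s. l (tx pc s) (tu pc s))
                   + traj_cost l lT tf tk' tf (tx pb) (tu pb)
                 = Jex + traj_cost l lT tf tk tf (tx pb) (tu pb)
                   + delta_cost l lT tf tk (real i * Tc) (infos i) pb"
    using traj_cost_splice[of tk "real i * Tc" tf "infos i" pb l lT] assms(1,2) integrable_pb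
      \<open>tx pc tk' = tx pb tk'\<close> unfolding pc tk' by simp
  ultimately show ?thesis
    using valid_pair_tube_subset[OF valid] integrable_infos \<open>i \<in> _\<close> budget
    unfolding pc tk' by simp
next
  assume pc: "pc = pb"
  have "(\<lambda>s. l (tx pb s) (tu pb s)) integrable_on {tk..tk'}"
    using integrable_subinterval_real[OF integrable_pb] assms(2) by simp
  then show ?thesis
    using backup_safe traj_cost_split[where px = "tx pb" and pu = "tu pb", OF assms(1,2) integrable_pb] assms(2)
    unfolding pc by simp
qed

lemma sol_tube_subset:
  assumes incr: "\<forall>k<K. t k < t (Suc k)" and "0 < K"
    and safe: "\<forall>k<K. \<forall>s\<in>{t k..t (Suc k)}. tube (com k) s \<subseteq> S s"
  shows "\<forall>s\<in>{t 0..t K}. sol_tube com t K s \<subseteq> S s"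
proof
  fix s assume "s \<in> {t 0..t K}"
  then obtain k where "k < K" "t k \<le> s" "s \<le> t (Suc k)" "seg_index t K s = k"
    using seg_index_cover[OF incr \<open>0 < K\<close>] by auto
  then show "sol_tube com t K s \<subseteq> S s"
    using safe unfolding sol_tube_def by auto
qed

lemma sol_running_cost_has_integral:
  fixes l :: "real^'n::finite \<Rightarrow> real^'m::finite \<Rightarrow> 'a::banach"
  assumes incr: "\<forall>k<K. t k < t (Suc k)" and "k \<le> K"
    and integrable: "\<forall>k<K. (\<lambda>s. l (tx (com k) s) (tu (com k) s)) integrable_on {t k..t (Suc k)}"
  shows "((\<lambda>s. l (sol_x com t K s) (sol_u com t K s)) has_integral
           (\<Sum>j<k. integral {t j..t (Suc j)} (\<lambda>s. l (tx (com j) s) (tu (com j) s)))) {t 0..t k}"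
proof (rule has_integral_concat[where g = "\<lambda>j s. l (tx (com j) s) (tu (com j) s)"])
  show "\<forall>j<k. t j \<le> t (Suc j)"
    using incr \<open>k \<le> K\<close> by (auto simp: less_imp_le)
  show "\<forall>j<k. ((\<lambda>s. l (tx (com j) s) (tu (com j) s)) has_integral
                 integral {t j..t (Suc j)} (\<lambda>s. l (tx (com j) s) (tu (com j) s))) {t j..t (Suc j)}"
    using integrable \<open>k \<le> K\<close> by auto
  show "\<forall>j<k. \<forall>s\<in>{t j..<t (Suc j)}.
          l (sol_x com t K s) (sol_u com t K s) = l (tx (com j) s) (tu (com j) s)"
  proof (intro allI impI ballI)
    fix j s assume "j < k" "s \<in> {t j..<t (Suc j)}"
    then have "seg_index t K s = j"
      using seg_index_eq[OF incr, of j s] \<open>k \<le> K\<close> by auto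
    then show "l (sol_x com t K s) (sol_u com t K s) = l (tx (com j) s) (tu (com j) s)"
      unfolding sol_x_def sol_u_def by simp
  qed
qed

lemma sol_cost_le_budget:
  fixes com bak :: "nat \<Rightarrow> ('n::finite,'m::finite) tubetraj"
    and l :: "real^'n \<Rightarrow> real^'m \<Rightarrow> real" and lT :: "real^'n \<Rightarrow> real" and tf :: real
    and t :: "nat \<Rightarrow> real"
  defines "Jb \<equiv> \<lambda>k c. traj_cost l lT tf c tf (tx (bak k)) (tu (bak k))"
    and "P \<equiv> \<lambda>k. integral {t k..t (Suc k)} (\<lambda>s. l (tx (com k) s) (tu (com k) s))"
  assumes incr: "\<forall>k<K. t k < t (Suc k)" and "0 < K" and "t K = tf"
    and integrable: "\<forall>k<K. (\<lambda>s. l (tx (com k) s) (tu (com k) s)) integrable_on {t k..t (Suc k)}"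
    and ends_on_backup: "\<forall>k<K. tx (com k) (t (Suc k)) = tx (bak k) (t (Suc k))"
    and step: "\<forall>k<K. exec_cost l com t K k + Jb k (t k) \<le> B
                 \<longrightarrow> exec_cost l com t K k + P k + Jb k (t (Suc k)) \<le> B"
    and "Jb 0 (t 0) \<le> B"
    and recompute: "\<forall>k. Suc k < K \<longrightarrow> Jb (Suc k) (t (Suc k)) \<le> Jb k (t (Suc k))"
  shows "traj_cost l lT tf (t 0) tf (sol_x com t K) (sol_u com t K) \<le> B"
proof -
  have exec: "exec_cost l com t K k = (\<Sum>j<k. P j)" if "k \<le> K" for k
    using sol_running_cost_has_integral[OF incr that integrable]
    unfolding exec_cost_def P_def by (rule integral_unique)
  obtain k1 where K: "K = Suc k1"
    using \<open>0 < K\<close> gr0_implies_Suc by blast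
  have "(\<Sum>j<Suc k1. P j) + Jb k1 (t (Suc k1)) \<le> B"
  proof (rule budget_invariant[where Jnow = "\<lambda>k. Jb k (t k)" and Jnext = "\<lambda>k. Jb k (t (Suc k))"])
    show "\<forall>k<K. (\<Sum>j<k. P j) + Jb k (t k) \<le> B \<longrightarrow> (\<Sum>j<Suc k. P j) + Jb k (t (Suc k)) \<le> B"
      using step exec by (simp add: add.commute add.left_commute)
  qed (use \<open>Jb 0 (t 0) \<le> B\<close> recompute K in auto)
  moreover have "seg_index t K tf = k1"
    unfolding seg_index_def \<open>t K = tf\<close>[symmetric] K by simp
  moreover have "tx (com k1) tf = tx (bak k1) tf"
    using ends_on_backup \<open>t K = tf\<close> unfolding K by auto
  ultimately show ?thesis
    using exec[of K] \<open>t K = tf\<close>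
    unfolding traj_cost_def exec_cost_def Jb_def sol_x_def K by simp
qed

theorem theorem1:
  fixes sy :: "('n::finite,'m::finite,'a::finite,'b::finite) sysdata"
    and S :: "real \<Rightarrow> (real^'n) set" and U :: "(real^'m) set" and Gs :: "(real^'n) set"
    and l :: "real^'n \<Rightarrow> real^'m \<Rightarrow> real" and lT :: "real^'n \<Rightarrow> real"
    and B t0 tf Tc lam wbar :: real
    and \<Theta> :: "((real^'a) \<times> (real^'b)) set" and \<theta>star :: "(real^'a) \<times> (real^'b)"
    and Phif :: "real^'n \<Rightarrow> real^'m \<Rightarrow> real^'a^'q::finite"
    and Phig :: "real^'n \<Rightarrow> real^'m \<Rightarrow> real^'b^'q"
    and K :: nat and t :: "nat \<Rightarrow> real"
    and Th :: "nat \<Rightarrow> ((real^'a) \<times> (real^'b)) set" and thh :: "nat \<Rightarrow> (real^'a) \<times> (real^'b)"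
    and bak :: "nat \<Rightarrow> ('n,'m) tubetraj" and info :: "nat \<Rightarrow> nat \<Rightarrow> ('n,'m) tubetraj"
    and com :: "nat \<Rightarrow> ('n,'m) tubetraj" and dw :: "nat \<Rightarrow> nat \<Rightarrow> real"
    and xs :: "real \<Rightarrow> real^'n" and us :: "real \<Rightarrow> real^'m"
    and nd :: "real \<Rightarrow> real^'n" and z :: "real \<Rightarrow> real^'q" and w :: "real \<Rightarrow> real^'q"
  defines "N \<equiv> \<lambda>k. num_horizons tf Tc (t k)"
    and "Fc \<equiv> \<lambda>k. feasible_set sy (Th k) (thh k) S U Gs l lT tf Tc B (exec_cost l com t K k)
                       (t k) (bak k) (info k)"
    and "score \<equiv> \<lambda>k i. exp (- lam * (real i * Tc)) * dw k i"
  assumes Tc_pos: "Tc > 0" and lam_pos: "lam > 0" and t0_lt: "t0 < tf"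
    and Nadd_bdd: "bounded (Nadd sy)"
    and Theta: "compact \<Theta>" "\<theta>star \<in> \<Theta>" "Th 0 = \<Theta>"
    and times: "t 0 = t0" "t K = tf" "\<forall>k<K. t k < t (Suc k)"
    and integrable_bak: "\<forall>k<K. (\<lambda>s. l (tx (bak k) s) (tu (bak k) s)) integrable_on {t k..tf}"
    and integrable_info: "\<forall>k<K. \<forall>i\<in>{1..N k}.
          (\<lambda>s. l (tx (info k i) s) (tu (info k i) s)) integrable_on {t k..t k + real i * Tc}"
    and backup: "\<forall>k<K. rci_tube sy (Th k) (thh k) S U Gs tf (t k) tf (bak k)
                        \<and> (\<forall>s\<in>{t k..tf}. tube (bak k) s \<subseteq> S s)"
    and backup0_budget: "traj_cost l lT tf t0 tf (tx (bak 0)) (tu (bak 0)) \<le> B"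
    and commit_info: "\<forall>k<K. Fc k \<noteq> {} \<longrightarrow>
          (\<exists>i\<in>Fc k. (\<forall>j\<in>Fc k. score k j \<le> score k i) \<and> com k = info k i
                      \<and> t (Suc k) = t k + real i * Tc)"
    and commit_cons: "\<forall>k<K. Fc k = {} \<longrightarrow> com k = bak k \<and> t (Suc k) = t k + Tc"
    and noise: "\<forall>s\<in>{t0..tf}. z s = Phif (xs s) (us s) *v fst \<theta>star + Phig (xs s) (us s) *v snd \<theta>star + w s
                        \<and> infnorm (w s) \<le> wbar"
    and update: "\<forall>k<K. Th (Suc k) = Th k \<inter>
          {\<theta>. \<forall>s\<in>{t k..t (Suc k)}. infnorm (z s - (Phif (xs s) (us s) *v fst \<theta> + Phig (xs s) (us s) *v snd \<theta>)) \<le> wbar}"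
    and tracking: "\<forall>s\<in>{t0..tf}. nd s \<in> Nadd sy \<and> xs s \<in> sol_tube com t K s
          \<and> (xs has_vector_derivative dyn sy (xs s) \<theta>star (us s) + nd s) (at s within {t0..tf})"
    and cost_mono: "\<forall>k. Suc k < K \<longrightarrow>
          traj_cost l lT tf (t (Suc k)) tf (tx (bak (Suc k))) (tu (bak (Suc k)))
            \<le> traj_cost l lT tf (t (Suc k)) tf (tx (bak k)) (tu (bak k))"
  shows "(\<forall>s\<in>{t0..tf}. sol_tube com t K s \<subseteq> S s)
       \<and> traj_cost l lT tf t0 tf (sol_x com t K) (sol_u com t K) \<le> B"
proof -
  have K: "0 < K"
    using times t0_lt by (cases K) auto
  have piece: "(\<forall>s\<in>{t k..t (Suc k)}. tube (com k) s \<subseteq> S s)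
      \<and> (\<lambda>s. l (tx (com k) s) (tu (com k) s)) integrable_on {t k..t (Suc k)}
      \<and> tx (com k) (t (Suc k)) = tx (bak k) (t (Suc k))
      \<and> (exec_cost l com t K k + traj_cost l lT tf (t k) tf (tx (bak k)) (tu (bak k)) \<le> B \<longrightarrow>
           exec_cost l com t K k + integral {t k..t (Suc k)} (\<lambda>s. l (tx (com k) s) (tu (com k) s))
             + traj_cost l lT tf (t (Suc k)) tf (tx (bak k)) (tu (bak k)) \<le> B)"
    if "k < K" for k
  proof (rule committed_tube_safe_within_budget[where pc = "com k" and pb = "bak k"])
    show "t k \<le> t (Suc k)"
      using times(3) that by (simp add: less_imp_le)
    show "t (Suc k) \<le> tf"
      using commit_times_le[OF times(3), of "Suc k" K] times(2) that by simp
    have "(\<exists>i\<in>Fc k. com k = info k i \<and> t (Suc k) = t k + real i * Tc) \<or> com k = bak k"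
      using commit_info commit_cons that by blast
    then show "(\<exists>i\<in>feasible_set sy (Th k) (thh k) S U Gs l lT tf Tc B (exec_cost l com t K k) (t k)
                    (bak k) (info k). com k = info k i \<and> t (Suc k) = t k + real i * Tc) \<or> com k = bak k"
      unfolding Fc_def .
  qed (use backup integrable_bak integrable_info that in \<open>auto simp: N_def\<close>)
  have "\<forall>s\<in>{t 0..t K}. sol_tube com t K s \<subseteq> S s"
    by (rule sol_tube_subset[OF times(3) K]) (use piece in blast)
  moreover have "traj_cost l lT tf (t 0) tf (sol_x com t K) (sol_u com t K) \<le> B"
    by (rule sol_cost_le_budget[where bak = bak, OF times(3) K times(2)])
      (use piece backup0_budget cost_mono times(1) in auto)
  ultimately show ?thesis
    using times(1,2) by simp
qed

end
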